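(* Let $f(\cdot\,;z)$ be non-negative and $\beta$-smooth for every $z\in\mathcal{Z}$, let $A$ be any symmetric deterministic algorithm, and suppose $\epsilon_{\mathbf{c}}=0$ (memorization of the training set is feasible). Then $$|\epsilon_{\mathrm{gen}}|\le 2\sqrt{2\beta\,\epsilon_{\mathrm{opt}}\,\epsilon_{\mathrm{stab}(A)}}+2\beta\,\epsilon_{\mathrm{stab}(A)},$$ and consequently $|\epsilon_{\mathrm{gen}}|=\mathcal{O}\big(\max\{\sqrt{\epsilon_{\mathrm{opt}}\epsilon_{\mathrm{stab}(A)}},\ \epsilon_{\mathrm{stab}(A)}\}\big)$.
   Context: Let $\mathcal{D}$ be an unknown distribution on an example space $\mathcal{Z}$, and let $z_1,\dots,z_n,z_1',\dots,z_n'$ be i.i.d. samples from $\mathcal{D}$. Set $S=(z_1,\dots,z_n)$ and, for $i\in\{1,\dots,n\}$, $S^{(i)}=(z_1,\dots,z_{i-1},z_i',z_{i+1},\dots,z_n)$. The loss is $f:\mathbb{R}^d\times\mathcal{Z}\to[0,\infty)$; $\beta$-smooth means $\|\nabla_w f(w,z)-\nabla_w f(u,z)\|_2\le\beta\|w-u\|_2$ for all $w,u$. Population risk $R(w)=\mathbb{E}_{Z\sim\mathcal{D}}[f(w,Z)]$; empirical risk $R_S(w)=\frac1n\sum_{j=1}^n f(w,z_j)$; $W^*_S$ is a minimizer of $R_S$ (assumed to exist). A deterministic algorithm $A$ maps a dataset to $A(S)\in\mathbb{R}^d$; it is symmetric if its output is unchanged under permutations of the dataset. Definitions: $\epsilon_{\mathrm{gen}}=\mathbb{E}[R(A(S))-R_S(A(S))]$;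 $\epsilon_{\mathrm{stab}(A)}=\mathbb{E}[\|A(S)-A(S^{(i)})\|_2^2]$; $\epsilon_{\mathrm{opt}}=\mathbb{E}[R_S(A(S))-R_S(W^*_S)]$; $\epsilon_{\mathbf{c}}=\mathbb{E}[R_S(W^*_S)]$. *)

theory Defs
  imports "HOL-Probability.Probability"
begin

text \<open>Datasets are lists of examples. The sample space carries the two
  independent i.i.d. samples (z_1..z_n) and (z_1'..z_n') drawn from D.\<close>

definition sample_space :: "'z measure \<Rightarrow> nat \<Rightarrow> ((nat \<Rightarrow> 'z) \<times> (nat \<Rightarrow> 'z)) measure" where
  "sample_space D n = (\<Pi>\<^sub>M j\<in>{..<n}. D) \<Otimes>\<^sub>M (\<Pi>\<^sub>M j\<in>{..<n}. D)"

definition dataset_S :: "nat \<Rightarrow> (nat \<Rightarrow> 'z) \<times> (nat \<Rightarrow> 'z) \<Rightarrow> 'z list" where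
  "dataset_S n \<omega> = map (fst \<omega>) [0..<n]"

definition dataset_Si :: "nat \<Rightarrow> nat \<Rightarrow> (nat \<Rightarrow> 'z) \<times> (nat \<Rightarrow> 'z) \<Rightarrow> 'z list" where
  "dataset_Si n i \<omega> = (map (fst \<omega>) [0..<n])[i := snd \<omega> i]"

definition pop_risk :: "'z measure \<Rightarrow> ('a \<Rightarrow> 'z \<Rightarrow> real) \<Rightarrow> 'a \<Rightarrow> real" where
  "pop_risk D f w = (\<integral>z. f w z \<partial>D)"

definition emp_risk :: "('a \<Rightarrow> 'z \<Rightarrow> real) \<Rightarrow> 'z list \<Rightarrow> 'a \<Rightarrow> real" where
  "emp_risk f S w = (\<Sum>z\<leftarrow>S. f w z) / real (length S)"

definition smooth :: "real \<Rightarrow> ('a::euclidean_space \<Rightarrow> real) \<Rightarrow> bool" where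
  "smooth \<beta> g \<longleftrightarrow> (\<exists>grad. (\<forall>w. (g has_derivative (\<lambda>h. grad w \<bullet> h)) (at w)) \<and>
       (\<forall>w u. norm (grad w - grad u) \<le> \<beta> * norm (w - u)))"

definition symmetric_alg :: "('z list \<Rightarrow> 'a) \<Rightarrow> bool" where
  "symmetric_alg A \<longleftrightarrow> (\<forall>xs ys. mset xs = mset ys \<longrightarrow> A xs = A ys)"

definition eps_gen where
  "eps_gen D f A n = (\<integral>\<omega>. pop_risk D f (A (dataset_S n \<omega>))
      - emp_risk f (dataset_S n \<omega>) (A (dataset_S n \<omega>)) \<partial>sample_space D n)"

definition eps_stab where
  "eps_stab D A n i = (\<integral>\<omega>. (norm (A (dataset_S n \<omega>) - A (dataset_Si n i \<omega>)))\<^sup>2 \<partial>sample_space D n)"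

definition eps_opt where
  "eps_opt D f A W n = (\<integral>\<omega>. emp_risk f (dataset_S n \<omega>) (A (dataset_S n \<omega>))
      - emp_risk f (dataset_S n \<omega>) (W (dataset_S n \<omega>)) \<partial>sample_space D n)"

definition eps_c where
  "eps_c D f W n = (\<integral>\<omega>. emp_risk f (dataset_S n \<omega>) (W (dataset_S n \<omega>)) \<partial>sample_space D n)"

end

theory Submission
  imports Defs
begin

(* Smoothness and non-negativity make every loss self-bounding, |grad f(w)|^2 <= 2 beta f(w),
   so that f(u) - f(w) <= l beta f(w) + (1/(2l) + beta/2) |u - w|^2 for every l > 0.
   Take u = A(S^(i)), w = A(S) and evaluate at z_i.  As z_i is independent of S^(i), the
   expected loss of A(S^(i)) at z_i is the expected population risk; by symmetry of A, the
   expected loss of A(S) at z_i is the expected empirical risk, which is eps_opt when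
   eps_c = 0.  Integrating the increment bound in both directions gives
   |eps_gen| <= l beta eps_opt + (1/(2l) + beta/2) eps_stab, and optimising over l
   gives the claim. *)

lemma smooth_quadratic_upper_bound:
  fixes g :: "'a::euclidean_space \<Rightarrow> real"
  assumes der: "\<And>w. (g has_derivative (\<lambda>h. grad w \<bullet> h)) (at w)"
    and lip: "\<And>w u. norm (grad w - grad u) \<le> \<beta> * norm (w - u)"
  shows "g u \<le> g w + grad w \<bullet> (u - w) + \<beta> / 2 * (norm (u - w))\<^sup>2"
proof -
  define d where "d = u - w"
  define \<psi> where "\<psi> t = g (w + t *\<^sub>R d) - t * (grad w \<bullet> d) - \<beta> / 2 * t\<^sup>2 * (norm d)\<^sup>2" for t
  have \<psi>_deriv: "(\<psi> has_real_derivative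
      (grad (w + t *\<^sub>R d) \<bullet> d - grad w \<bullet> d - \<beta> * t * (norm d)\<^sup>2)) (at t)" for t
  proof -
    have "((\<lambda>t. w + t *\<^sub>R d) has_derivative (\<lambda>h. h *\<^sub>R d)) (at t)"
      by (auto intro!: derivative_eq_intros)
    from has_derivative_compose[OF this der]
    have "((\<lambda>t. g (w + t *\<^sub>R d)) has_derivative (\<lambda>h. grad (w + t *\<^sub>R d) \<bullet> (h *\<^sub>R d))) (at t)"
      by simp
    then have g_deriv: "((\<lambda>t. g (w + t *\<^sub>R d)) has_real_derivative (grad (w + t *\<^sub>R d) \<bullet> d)) (at t)"
      by (rule has_derivative_imp_has_field_derivative) (simp add: inner_scaleR_right)
    show ?thesis
      unfolding \<psi>_def by (rule derivative_eq_intros g_deriv | simp)+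
  qed
  have "\<psi> 1 \<le> \<psi> 0"
  proof (rule DERIV_nonpos_imp_nonincreasing[of 0 1])
    fix t :: real assume t: "0 \<le> t" "t \<le> 1"
    have "(grad (w + t *\<^sub>R d) - grad w) \<bullet> d \<le> norm (grad (w + t *\<^sub>R d) - grad w) * norm d"
      by (rule norm_cauchy_schwarz)
    also have "\<dots> \<le> \<beta> * norm (t *\<^sub>R d) * norm d"
      using lip[of "w + t *\<^sub>R d" w] by (intro mult_right_mono) auto
    also have "\<dots> = \<beta> * t * (norm d)\<^sup>2"
      using t by (simp add: power2_eq_square)
    finally have "grad (w + t *\<^sub>R d) \<bullet> d - grad w \<bullet> d - \<beta> * t * (norm d)\<^sup>2 \<le> 0"
      by (simp add: inner_diff_left)
    then show "\<exists>y. (\<psi> has_real_derivative y) (at t) \<and> y \<le> 0"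
      using \<psi>_deriv by blast
  qed simp
  then show ?thesis
    unfolding \<psi>_def d_def by simp
qed

lemma smooth_nonneg_constant:
  assumes "smooth \<beta> (g :: 'a::euclidean_space \<Rightarrow> real)"
  shows "0 \<le> \<beta>"
proof -
  obtain grad :: "'a \<Rightarrow> 'a" where lip: "\<And>w u. norm (grad w - grad u) \<le> \<beta> * norm (w - u)"
    using assms unfolding smooth_def by blast
  obtain b :: 'a where b: "b \<in> Basis"
    using nonempty_Basis by blast
  have "0 \<le> \<beta> * norm (b - 0)"
    using lip[of b 0] norm_ge_zero order_trans by blast
  then show ?thesis
    using b by simp
qed

(* Evaluate the quadratic upper bound at the gradient step w - t grad w, t = 1 / beta,
   where g is still non-negative. *)
lemma smooth_nonneg_gradient_bound:
  fixes g :: "'a::euclidean_space \<Rightarrow> real"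
  assumes der: "\<And>w. (g has_derivative (\<lambda>h. grad w \<bullet> h)) (at w)"
    and lip: "\<And>w u. norm (grad w - grad u) \<le> \<beta> * norm (w - u)"
    and nonneg: "\<And>w. 0 \<le> g w" and "0 \<le> \<beta>"
  shows "(norm (grad w))\<^sup>2 \<le> 2 * \<beta> * g w"
proof -
  define G where "G = grad w"
  have step: "t * (norm G)\<^sup>2 - \<beta> / 2 * t\<^sup>2 * (norm G)\<^sup>2 \<le> g w" for t
  proof -
    have "0 \<le> g (w - t *\<^sub>R G)"
      by (rule nonneg)
    also have "\<dots> \<le> g w + G \<bullet> (- (t *\<^sub>R G)) + \<beta> / 2 * (norm (- (t *\<^sub>R G)))\<^sup>2"
      using smooth_quadratic_upper_bound[OF der lip, of "w - t *\<^sub>R G" w] by (simp add: G_def)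
    also have "\<dots> = g w - t * (norm G)\<^sup>2 + \<beta> / 2 * t\<^sup>2 * (norm G)\<^sup>2"
      by (simp add: power2_norm_eq_inner power_mult_distrib inner_commute)
    finally show ?thesis
      by simp
  qed
  show ?thesis
  proof (cases "\<beta> = 0")
    case True
    show ?thesis
    proof (rule ccontr)
      assume "\<not> ?thesis"
      then have "0 < (norm G)\<^sup>2"
        using True nonneg[of w] by (simp add: G_def)
      moreover have "(g w + 1) / (norm G)\<^sup>2 * (norm G)\<^sup>2 \<le> g w"
        using step[of "(g w + 1) / (norm G)\<^sup>2"] True by simp
      ultimately show False
        by simp
    qed
  next
    case False
    then have "0 < \<beta>"
      using \<open>0 \<le> \<beta>\<close> by simp
    have "1 / \<beta> * (norm G)\<^sup>2 - \<beta> / 2 * (1 / \<beta>)\<^sup>2 * (norm G)\<^sup>2 \<le> g w"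
      by (rule step)
    then have "(norm G)\<^sup>2 / (2 * \<beta>) \<le> g w"
      using \<open>0 < \<beta>\<close> by (simp add: field_simps power2_eq_square)
    then show ?thesis
      using \<open>0 < \<beta>\<close> by (simp add: G_def field_simps)
  qed
qed

lemma smooth_nonneg_increment_bound:
  fixes g :: "'a::euclidean_space \<Rightarrow> real"
  assumes "smooth \<beta> g" and nonneg: "\<And>w. 0 \<le> g w" and "0 < l"
  shows "g u - g w \<le> l * \<beta> * g w + (1 / (2 * l) + \<beta> / 2) * (norm (u - w))\<^sup>2"
proof -
  obtain grad where der: "\<And>w. (g has_derivative (\<lambda>h. grad w \<bullet> h)) (at w)"
    and lip: "\<And>w u. norm (grad w - grad u) \<le> \<beta> * norm (w - u)"
    using \<open>smooth \<beta> g\<close> unfolding smooth_def by blast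
  have gradient: "(norm (grad w))\<^sup>2 \<le> 2 * \<beta> * g w"
    using smooth_nonneg_gradient_bound[OF der lip nonneg smooth_nonneg_constant[OF \<open>smooth \<beta> g\<close>]] .
  have "grad w \<bullet> (u - w) \<le> norm (grad w) * norm (u - w)"
    by (rule norm_cauchy_schwarz)
  also have "\<dots> \<le> (l * (norm (grad w))\<^sup>2 + (norm (u - w))\<^sup>2 / l) / 2"
  proof -
    have "0 \<le> (l * norm (grad w) - norm (u - w))\<^sup>2"
      by simp
    then have "2 * l * (norm (grad w) * norm (u - w)) \<le> l\<^sup>2 * (norm (grad w))\<^sup>2 + (norm (u - w))\<^sup>2"
      by (simp add: power2_eq_square algebra_simps)
    then show ?thesis
      using \<open>0 < l\<close> by (simp add: field_simps power2_eq_square)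
  qed
  also have "\<dots> \<le> (l * (2 * \<beta> * g w) + (norm (u - w))\<^sup>2 / l) / 2"
    using gradient \<open>0 < l\<close> by (simp add: mult_left_mono)
  finally have "grad w \<bullet> (u - w) \<le> l * \<beta> * g w + (norm (u - w))\<^sup>2 / (2 * l)"
    by simp
  then show ?thesis
    using smooth_quadratic_upper_bound[OF der lip, of u w] by (simp add: algebra_simps)
qed

lemma le_of_forall_pos_bound_degenerate:
  fixes G b p s :: real
  assumes "0 \<le> b" "0 \<le> p" "0 \<le> s" and "b * p = 0 \<or> s = 0"
    and bound: "\<And>l. 0 < l \<Longrightarrow> G \<le> l * b * p + (1 / (2 * l) + b / 2) * s"
  shows "G \<le> b * s / 2"
proof (rule field_le_epsilon)
  fix e :: real assume "0 < e"
  from \<open>b * p = 0 \<or> s = 0\<close> show "G \<le> b * s / 2 + e"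
  proof
    assume "b * p = 0"
    have "G \<le> (s + 1) / e * b * p + (1 / (2 * ((s + 1) / e)) + b / 2) * s"
      using \<open>0 < e\<close> assms(3) by (intro bound) simp
    moreover have "(s + 1) / e * b * p = 0"
      using \<open>b * p = 0\<close> by simp
    moreover have "1 / (2 * ((s + 1) / e)) * s \<le> e"
      using \<open>0 < e\<close> assms(3) by (simp add: field_simps)
    ultimately show ?thesis
      unfolding distrib_right by linarith
  next
    assume "s = 0"
    have "0 < b * p + 1"
      using assms(1,2) by (simp add: add_nonneg_pos)
    have "G \<le> e / (b * p + 1) * b * p"
      using bound[of "e / (b * p + 1)"] \<open>0 < e\<close> \<open>0 < b * p + 1\<close> \<open>s = 0\<close> by simp
    also have "\<dots> \<le> e"
      using \<open>0 < e\<close> \<open>0 < b * p + 1\<close> by (simp add: field_simps)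
    finally show ?thesis
      using \<open>s = 0\<close> by simp
  qed
qed

(* l = s / sqrt (2 b p s) balances the two terms depending on l. *)
lemma le_sqrt_bound_of_forall_pos:
  fixes G b p s :: real
  assumes "0 \<le> b" "0 \<le> p" "0 \<le> s"
    and bound: "\<And>l. 0 < l \<Longrightarrow> G \<le> l * b * p + (1 / (2 * l) + b / 2) * s"
  shows "G \<le> 2 * sqrt (2 * b * p * s) + 2 * b * s"
proof -
  define r where "r = sqrt (2 * b * p * s)"
  have "0 \<le> r" and r2: "r\<^sup>2 = 2 * b * p * s"
    using assms(1-3) by (simp_all add: r_def)
  have "G \<le> r + b * s / 2"
  proof (cases "0 < r")
    case True
    then have "0 < s"
      using r2 assms(3) by (cases "s = 0") auto
    have "s / r * b * p = r / 2"
      using True r2 by (simp add: field_simps power2_eq_square)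
    moreover have "1 / (2 * (s / r)) * s = r / 2"
      using True \<open>0 < s\<close> by (simp add: field_simps)
    ultimately show ?thesis
      using bound[of "s / r"] True \<open>0 < s\<close> by (simp add: algebra_simps)
  next
    case False
    then have "r = 0" and "b * p = 0 \<or> s = 0"
      using \<open>0 \<le> r\<close> r2 by simp_all
    then show ?thesis
      using le_of_forall_pos_bound_degenerate[OF assms(1-3) _ bound] by simp
  qed
  moreover have "0 \<le> b * s"
    using assms(1,3) by simp
  ultimately show ?thesis
    using \<open>0 \<le> r\<close> unfolding r_def by linarith
qed

lemma sqrt_bound_le_max:
  fixes b p s :: real
  assumes "0 \<le> b" "0 \<le> p" "0 \<le> s"
  shows "2 * sqrt (2 * b * p * s) + 2 * b * s \<le> (2 * sqrt (2 * b) + 2 * b) * max (sqrt (p * s)) s"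
proof -
  have "sqrt (2 * b * p * s) = sqrt (2 * b) * sqrt (p * s)"
    by (simp add: real_sqrt_mult mult.assoc)
  also have "\<dots> \<le> sqrt (2 * b) * max (sqrt (p * s)) s"
    using assms(1) by (intro mult_left_mono) auto
  finally have "sqrt (2 * b * p * s) \<le> sqrt (2 * b) * max (sqrt (p * s)) s" .
  moreover have "b * s \<le> b * max (sqrt (p * s)) s"
    using assms(1) by (intro mult_left_mono) auto
  ultimately show ?thesis
    by (simp add: algebra_simps)
qed

lemma abs_integral_diff_le:
  fixes a b d :: "'x \<Rightarrow> real"
  assumes [simp]: "integrable M a" "integrable M b" "integrable M d" and "0 \<le> \<kappa>"
    and up: "\<And>x. b x - a x \<le> \<kappa> * a x + c * d x"
    and down: "\<And>x. a x - b x \<le> \<kappa> * b x + c * d x"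
  shows "\<bar>integral\<^sup>L M b - integral\<^sup>L M a\<bar> \<le> \<kappa> * integral\<^sup>L M a + c * integral\<^sup>L M d"
proof -
  have "integral\<^sup>L M b \<le> integral\<^sup>L M (\<lambda>x. (1 + \<kappa>) * a x + c * d x)"
    using up by (intro integral_mono) (auto simp: algebra_simps)
  moreover have "integral\<^sup>L M a \<le> integral\<^sup>L M (\<lambda>x. (1 + \<kappa>) * b x + c * d x)"
    using down by (intro integral_mono) (auto simp: algebra_simps)
  moreover have "\<kappa> * integral\<^sup>L M b \<le> \<kappa> * integral\<^sup>L M a" if "integral\<^sup>L M b < integral\<^sup>L M a"
    using that \<open>0 \<le> \<kappa>\<close> by (simp add: mult_left_mono)
  ultimately show ?thesis
    by (auto simp: algebra_simps abs_if)
qed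

lemma integrable_nonneg_le:
  fixes g h :: "'x \<Rightarrow> real"
  assumes "integrable M h" "g \<in> borel_measurable M" "\<And>x. 0 \<le> g x" "\<And>x. g x \<le> h x"
  shows "integrable M g"
proof (rule Bochner_Integration.integrable_bound[OF assms(1,2)])
  show "AE x in M. norm (g x) \<le> norm (h x)"
    using assms(3,4) by (auto intro!: AE_I2 intro: order_trans[OF _ abs_ge_self])
qed

lemma measurable_fun_upd_PiM:
  assumes "i \<in> I"
  shows "(\<lambda>(x, c). x(i := c)) \<in> Pi\<^sub>M I M \<Otimes>\<^sub>M M i \<rightarrow>\<^sub>M Pi\<^sub>M I M"
  using measurable_add_dim[of i I M] assms by (simp add: insert_absorb)

lemma measurable_replace_one:
  assumes "i \<in> I"
  shows "(\<lambda>\<omega>. ((fst \<omega>)(i := snd \<omega> i), fst \<omega> i)) \<in> Pi\<^sub>M I M \<Otimes>\<^sub>M Pi\<^sub>M I M \<rightarrow>\<^sub>M Pi\<^sub>M I M \<Otimes>\<^sub>M M i"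
proof -
  have [measurable]: "(\<lambda>(x, c). x(i := c)) \<in> Pi\<^sub>M I M \<Otimes>\<^sub>M M i \<rightarrow>\<^sub>M Pi\<^sub>M I M"
    "(\<lambda>x. x i) \<in> Pi\<^sub>M I M \<rightarrow>\<^sub>M M i"
    using assms by (rule measurable_fun_upd_PiM, rule measurable_component_singleton)
  show ?thesis
    by measurable
qed

context prob_space
begin

lemma nn_integral_PiM_update:
  assumes "finite I" "i \<in> I" and g[measurable]: "g \<in> borel_measurable (Pi\<^sub>M I (\<lambda>_. M))"
  shows "(\<integral>\<^sup>+x. \<integral>\<^sup>+c. g (x(i := c)) \<partial>M \<partial>Pi\<^sub>M I (\<lambda>_. M)) = integral\<^sup>N (Pi\<^sub>M I (\<lambda>_. M)) g"
proof -
  interpret product_sigma_finite "\<lambda>_. M" by unfold_locales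
  have I: "I = insert i (I - {i})" and fin: "finite (I - {i})" using assms by auto
  have "(\<lambda>(x, c). g (x(i := c))) \<in> borel_measurable (Pi\<^sub>M I (\<lambda>_. M) \<Otimes>\<^sub>M M)"
    using measurable_compose[OF measurable_fun_upd_PiM[OF \<open>i \<in> I\<close>] g] by (simp add: split_beta')
  then have [measurable]: "(\<lambda>x. \<integral>\<^sup>+c. g (x(i := c)) \<partial>M) \<in> borel_measurable (Pi\<^sub>M I (\<lambda>_. M))"
    by measurable
  have "(\<integral>\<^sup>+x. \<integral>\<^sup>+c. g (x(i := c)) \<partial>M \<partial>Pi\<^sub>M I (\<lambda>_. M))
      = (\<integral>\<^sup>+x. \<integral>\<^sup>+c'. \<integral>\<^sup>+c. g (x(i := c', i := c)) \<partial>M \<partial>M \<partial>Pi\<^sub>M (I - {i}) (\<lambda>_. M))"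
    using product_nn_integral_insert[OF fin, of i "\<lambda>x. \<integral>\<^sup>+c. g (x(i := c)) \<partial>M"] I by simp
  also have "\<dots> = (\<integral>\<^sup>+x. \<integral>\<^sup>+c. g (x(i := c)) \<partial>M \<partial>Pi\<^sub>M (I - {i}) (\<lambda>_. M))"
    by (simp add: emeasure_space_1)
  also have "\<dots> = integral\<^sup>N (Pi\<^sub>M I (\<lambda>_. M)) g"
    using product_nn_integral_insert[OF fin, of i g] I by simp
  finally show ?thesis .
qed


(* Replacing coordinate i of a sample by a fresh one makes the old coordinate an
   independent draw.  The proof resamples coordinate i once more (nn_integral_PiM_update),
   which decouples the evaluation point from the sample, and swaps the two fresh draws. *)
lemma nn_integral_replace_one:
  assumes "finite I" "i \<in> I"
    and g[measurable]: "g \<in> borel_measurable (Pi\<^sub>M I (\<lambda>_. M) \<Otimes>\<^sub>M M)"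
  shows "(\<integral>\<^sup>+\<omega>. g ((fst \<omega>)(i := snd \<omega> i), fst \<omega> i) \<partial>(Pi\<^sub>M I (\<lambda>_. M) \<Otimes>\<^sub>M Pi\<^sub>M I (\<lambda>_. M)))
       = integral\<^sup>N (Pi\<^sub>M I (\<lambda>_. M) \<Otimes>\<^sub>M M) g"
proof -
  let ?P = "Pi\<^sub>M I (\<lambda>_. M)"
  interpret P: prob_space ?P by (intro prob_space_PiM) (rule prob_space_axioms)
  interpret MM: pair_sigma_finite M M by unfold_locales
  have [measurable]: "(\<lambda>x. x i) \<in> ?P \<rightarrow>\<^sub>M M"
    using \<open>i \<in> I\<close> by (rule measurable_component_singleton)
  have [measurable]: "(\<lambda>(x, c). x(i := c)) \<in> ?P \<Otimes>\<^sub>M M \<rightarrow>\<^sub>M ?P"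
    using \<open>i \<in> I\<close> by (rule measurable_fun_upd_PiM)
  have [measurable]: "(\<lambda>(x, c). g (x(i := c), x i)) \<in> borel_measurable (?P \<Otimes>\<^sub>M M)"
    by measurable
  have "(\<integral>\<^sup>+\<omega>. g ((fst \<omega>)(i := snd \<omega> i), fst \<omega> i) \<partial>(?P \<Otimes>\<^sub>M ?P))
      = (\<integral>\<^sup>+x. \<integral>\<^sup>+y. g (x(i := y i), x i) \<partial>?P \<partial>?P)"
  proof -
    have "(\<lambda>(x, y). g (x(i := y i), x i)) \<in> borel_measurable (?P \<Otimes>\<^sub>M ?P)"
      using measurable_compose[OF measurable_replace_one[OF \<open>i \<in> I\<close>] g] by (simp add: split_beta')
    from P.nn_integral_fst[OF this] show ?thesis
      by (simp add: split_beta')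
  qed
  also have "\<dots> = (\<integral>\<^sup>+x. \<integral>\<^sup>+c. g (x(i := c), x i) \<partial>M \<partial>?P)"
  proof (rule nn_integral_cong)
    fix x assume "x \<in> space ?P"
    then have [measurable]: "(\<lambda>c. g (x(i := c), x i)) \<in> borel_measurable M"
      by measurable
    have "distr ?P M (\<lambda>y. y i) = M"
      using \<open>i \<in> I\<close> by (intro distr_PiM_component prob_space_axioms)
    then have "(\<integral>\<^sup>+c. g (x(i := c), x i) \<partial>M) = (\<integral>\<^sup>+c. g (x(i := c), x i) \<partial>distr ?P M (\<lambda>y. y i))"
      by simp
    also have "\<dots> = (\<integral>\<^sup>+y. g (x(i := y i), x i) \<partial>?P)"
      by (rule nn_integral_distr) auto
    finally show "(\<integral>\<^sup>+y. g (x(i := y i), x i) \<partial>?P) = (\<integral>\<^sup>+c. g (x(i := c), x i) \<partial>M)"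
      by simp
  qed
  also have "\<dots> = (\<integral>\<^sup>+x. \<integral>\<^sup>+a. \<integral>\<^sup>+c. g (x(i := c), a) \<partial>M \<partial>M \<partial>?P)"
    using nn_integral_PiM_update[OF assms(1,2), of "\<lambda>x. \<integral>\<^sup>+c. g (x(i := c), x i) \<partial>M"] by simp
  also have "\<dots> = (\<integral>\<^sup>+x. \<integral>\<^sup>+c. \<integral>\<^sup>+a. g (x(i := c), a) \<partial>M \<partial>M \<partial>?P)"
  proof (rule nn_integral_cong)
    fix x assume [measurable]: "x \<in> space ?P"
    have "(\<lambda>(c, a). g (x(i := c), a)) \<in> borel_measurable (M \<Otimes>\<^sub>M M)"
      by measurable
    from MM.Fubini'[OF this]
    show "(\<integral>\<^sup>+a. \<integral>\<^sup>+c. g (x(i := c), a) \<partial>M \<partial>M) = (\<integral>\<^sup>+c. \<integral>\<^sup>+a. g (x(i := c), a) \<partial>M \<partial>M)"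
      by simp
  qed
  also have "\<dots> = (\<integral>\<^sup>+x. \<integral>\<^sup>+a. g (x, a) \<partial>M \<partial>?P)"
    using nn_integral_PiM_update[OF assms(1,2), of "\<lambda>x. \<integral>\<^sup>+a. g (x, a) \<partial>M"] by simp
  also have "\<dots> = integral\<^sup>N (?P \<Otimes>\<^sub>M M) g"
    by (rule nn_integral_fst) (rule g)
  finally show ?thesis .
qed

lemma distr_replace_one:
  assumes "finite I" "i \<in> I"
  shows "distr (Pi\<^sub>M I (\<lambda>_. M) \<Otimes>\<^sub>M Pi\<^sub>M I (\<lambda>_. M)) (Pi\<^sub>M I (\<lambda>_. M) \<Otimes>\<^sub>M M)
           (\<lambda>\<omega>. ((fst \<omega>)(i := snd \<omega> i), fst \<omega> i))
         = Pi\<^sub>M I (\<lambda>_. M) \<Otimes>\<^sub>M M"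
    (is "distr ?PP ?PM ?\<phi> = ?PM")
proof (rule measure_eqI)
  have [measurable]: "?\<phi> \<in> ?PP \<rightarrow>\<^sub>M ?PM"
    using \<open>i \<in> I\<close> by (rule measurable_replace_one)
  fix X assume X: "X \<in> sets (distr ?PP ?PM ?\<phi>)"
  then have [measurable]: "X \<in> sets ?PM" by simp
  have "emeasure (distr ?PP ?PM ?\<phi>) X = (\<integral>\<^sup>+xz. indicator X xz \<partial>distr ?PP ?PM ?\<phi>)"
    using X by simp
  also have "\<dots> = (\<integral>\<^sup>+\<omega>. indicator X (?\<phi> \<omega>) \<partial>?PP)"
    by (rule nn_integral_distr) measurable
  also have "\<dots> = integral\<^sup>N ?PM (indicator X)"
    using nn_integral_replace_one[OF assms, of "indicator X"] by simp
  also have "\<dots> = emeasure ?PM X"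
    by simp
  finally show "emeasure (distr ?PP ?PM ?\<phi>) X = emeasure ?PM X" .
qed simp

lemma integral_pair_fst:
  fixes g :: "'b \<Rightarrow> 'c::{banach, second_countable_topology}"
  assumes "g \<in> borel_measurable N"
  shows "(\<integral>\<omega>. g (fst \<omega>) \<partial>(N \<Otimes>\<^sub>M M)) = integral\<^sup>L N g"
  using integral_distr[OF measurable_fst assms, of M] distr_pair_fst[of N] by simp

lemma integral_PiM_swap_symmetric:
  fixes g :: "'a list \<Rightarrow> 'a \<Rightarrow> real"
  assumes "i < n" "j < n"
    and symmetric: "\<And>xs ys. mset xs = mset ys \<Longrightarrow> g xs = g ys"
    and [measurable]: "(\<lambda>x. g (map x [0..<n]) (x i)) \<in> borel_measurable (Pi\<^sub>M {..<n} (\<lambda>_. M))"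
  shows "(\<integral>x. g (map x [0..<n]) (x j) \<partial>Pi\<^sub>M {..<n} (\<lambda>_. M))
       = (\<integral>x. g (map x [0..<n]) (x i) \<partial>Pi\<^sub>M {..<n} (\<lambda>_. M))"
proof -
  let ?P = "Pi\<^sub>M {..<n} (\<lambda>_. M)"
  define \<tau> where "\<tau> = Transposition.transpose i j"
  define T where "T x = (\<lambda>k\<in>{..<n}. x (\<tau> k))" for x :: "nat \<Rightarrow> 'a"
  have \<tau>: "\<tau> permutes {..<n}"
    unfolding \<tau>_def using assms(1,2) by (intro permutes_swap_id) auto
  then have \<tau>_into: "\<tau> \<in> {..<n} \<rightarrow> {..<n}"
    using permutes_in_image[OF \<tau>] by auto
  have T[measurable]: "T \<in> ?P \<rightarrow>\<^sub>M ?P"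
    unfolding T_def using \<tau>_into
    by (intro measurable_restrict measurable_component_singleton) auto
  have "distr ?P ?P T = ?P"
    using distr_PiM_reindex[of "{..<n}" "\<lambda>_. M" \<tau> "{..<n}"] \<tau>_into permutes_inj_on[OF \<tau>]
      prob_space_axioms unfolding T_def by simp
  then have "(\<integral>x. g (map x [0..<n]) (x i) \<partial>?P) = (\<integral>x. g (map (T x) [0..<n]) (T x i) \<partial>?P)"
    using integral_distr[OF T, of "\<lambda>x. g (map x [0..<n]) (x i)"] by simp
  also have "\<dots> = (\<integral>x. g (map x [0..<n]) (x j) \<partial>?P)"
  proof (rule Bochner_Integration.integral_cong[OF refl])
    fix x
    have "map (T x) [0..<n] = permute_list \<tau> (map x [0..<n])"
      using \<tau>_into by (auto simp: T_def permute_list_def Pi_iff)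
    then have "g (map (T x) [0..<n]) = g (map x [0..<n])"
      using mset_permute_list[of \<tau> "map x [0..<n]"] \<tau> by (auto intro: symmetric)
    moreover have "T x i = x j"
      using assms(1) by (simp add: T_def \<tau>_def)
    ultimately show "g (map (T x) [0..<n]) (T x i) = g (map x [0..<n]) (x j)"
      by simp
  qed
  finally show ?thesis ..
qed

end

lemma map_upt_update: "i < n \<Longrightarrow> (map x [0..<n])[i := c] = map (x(i := c)) [0..<n]"
  by (rule nth_equalityI) (auto simp: nth_list_update)

lemma emp_risk_map_upt: "emp_risk f (map x [0..<n]) w = (\<Sum>j<n. f w (x j)) / real n"
  by (simp add: emp_risk_def sum_list_sum_nth atLeast0LessThan)

locale replace_one_learning = D: prob_space D
  for D :: "'z measure" +
  fixes f :: "'a::euclidean_space \<Rightarrow> 'z \<Rightarrow> real" and A :: "'z list \<Rightarrow> 'a" and n i :: nat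
  assumes i_less_n: "i < n"
    and f_nonneg: "\<And>w z. 0 \<le> f w z"
    and f_measurable: "(\<lambda>(w, z). f w z) \<in> borel_measurable (borel \<Otimes>\<^sub>M D)"
    and A_measurable[measurable]: "(\<lambda>s. A (map s [0..<n])) \<in> borel_measurable (\<Pi>\<^sub>M j\<in>{..<n}. D)"
    and A_symmetric: "symmetric_alg A"
begin

abbreviation Dn :: "(nat \<Rightarrow> 'z) measure" where
  "Dn \<equiv> \<Pi>\<^sub>M j\<in>{..<n}. D"

definition train_loss :: "nat \<Rightarrow> (nat \<Rightarrow> 'z) \<times> (nat \<Rightarrow> 'z) \<Rightarrow> real" where
  "train_loss j \<omega> = f (A (dataset_S n \<omega>)) (fst \<omega> j)"

definition heldout_loss :: "(nat \<Rightarrow> 'z) \<times> (nat \<Rightarrow> 'z) \<Rightarrow> real" where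
  "heldout_loss \<omega> = f (A (dataset_Si n i \<omega>)) (fst \<omega> i)"

definition replace_one_shift :: "(nat \<Rightarrow> 'z) \<times> (nat \<Rightarrow> 'z) \<Rightarrow> real" where
  "replace_one_shift \<omega> = (norm (A (dataset_S n \<omega>) - A (dataset_Si n i \<omega>)))\<^sup>2"

sublocale Dn: prob_space Dn
  by (intro prob_space_PiM) (rule D.prob_space_axioms)

lemma sample_space_eq: "sample_space D n = Dn \<Otimes>\<^sub>M Dn"
  by (simp add: sample_space_def)

lemma f_measurable_comp[measurable]:
  assumes "g \<in> borel_measurable M" "h \<in> M \<rightarrow>\<^sub>M D"
  shows "(\<lambda>x. f (g x) (h x)) \<in> borel_measurable M"
  using measurable_compose[OF measurable_Pair[OF assms] f_measurable] by simp

lemma sample_loss_measurable: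
  assumes "k < n"
  shows "(\<lambda>x. f (A (map x [0..<n])) (x k)) \<in> borel_measurable Dn"
proof -
  have "(\<lambda>x. x k) \<in> Dn \<rightarrow>\<^sub>M D"
    using assms by (intro measurable_component_singleton) auto
  then show ?thesis
    by (rule f_measurable_comp[OF A_measurable])
qed

lemma train_loss_measurable:
  assumes "k < n"
  shows "train_loss k \<in> borel_measurable (sample_space D n)"
  using measurable_compose[OF measurable_fst sample_loss_measurable[OF assms]]
  by (simp add: sample_space_eq train_loss_def[abs_def] dataset_S_def)

lemma heldout_loss_eq_comp:
  "heldout_loss = (\<lambda>\<omega>. f (A (map ((fst \<omega>)(i := snd \<omega> i)) [0..<n])) (fst \<omega> i))"
  using i_less_n by (simp add: fun_eq_iff heldout_loss_def dataset_Si_def map_upt_update)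

lemma replace_one_measurable[measurable]:
  "(\<lambda>\<omega>. ((fst \<omega>)(i := snd \<omega> i), fst \<omega> i)) \<in> Dn \<Otimes>\<^sub>M Dn \<rightarrow>\<^sub>M Dn \<Otimes>\<^sub>M D"
  using measurable_replace_one[of i "{..<n}" "\<lambda>_. D"] i_less_n by simp

lemma loss_measurable[measurable]: "(\<lambda>(x, z). f (A (map x [0..<n])) z) \<in> borel_measurable (Dn \<Otimes>\<^sub>M D)"
  by measurable

lemma heldout_loss_measurable: "heldout_loss \<in> borel_measurable (sample_space D n)"
  unfolding heldout_loss_eq_comp sample_space_eq
  using measurable_compose[OF replace_one_measurable loss_measurable] by (simp add: split_beta')

lemma integral_train_loss:
  assumes "j < n"
  shows "integral\<^sup>L (sample_space D n) (train_loss j) = integral\<^sup>L (sample_space D n) (train_loss i)"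
proof -
  have on_Dn: "integral\<^sup>L (sample_space D n) (train_loss k) = (\<integral>x. f (A (map x [0..<n])) (x k) \<partial>Dn)"
    if "k < n" for k
    using Dn.integral_pair_fst[OF sample_loss_measurable[OF that]]
    by (simp add: sample_space_eq train_loss_def[abs_def] dataset_S_def)
  have "f (A xs) = f (A ys)" if "mset xs = mset ys" for xs ys
    using A_symmetric that unfolding symmetric_alg_def by metis
  from D.integral_PiM_swap_symmetric[OF i_less_n assms this sample_loss_measurable[OF i_less_n]]
  show ?thesis
    by (simp add: on_Dn[OF assms] on_Dn[OF i_less_n])
qed

lemma emp_risk_eq_sum_train_loss:
  "emp_risk f (dataset_S n \<omega>) (A (dataset_S n \<omega>)) = (\<Sum>j<n. train_loss j \<omega>) / real n"
  by (simp add: dataset_S_def train_loss_def emp_risk_map_upt)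

context
  assumes emp_risk_integrable:
    "integrable (sample_space D n) (\<lambda>\<omega>. emp_risk f (dataset_S n \<omega>) (A (dataset_S n \<omega>)))"
begin

lemma integrable_train_loss:
  assumes "j < n"
  shows "integrable (sample_space D n) (train_loss j)"
proof (rule integrable_nonneg_le)
  show "integrable (sample_space D n)
      (\<lambda>\<omega>. real n * emp_risk f (dataset_S n \<omega>) (A (dataset_S n \<omega>)))"
    using emp_risk_integrable by simp
  show "train_loss j \<in> borel_measurable (sample_space D n)"
    using assms by (rule train_loss_measurable)
  show "train_loss j \<omega> \<le> real n * emp_risk f (dataset_S n \<omega>) (A (dataset_S n \<omega>))" for \<omega>
  proof -
    have "train_loss j \<omega> \<le> (\<Sum>k<n. train_loss k \<omega>)"
      using assms by (intro member_le_sum) (auto simp: train_loss_def f_nonneg)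
    then show ?thesis
      using i_less_n by (simp add: emp_risk_eq_sum_train_loss)
  qed
qed (simp add: train_loss_def f_nonneg)

lemma integral_emp_risk:
  "(\<integral>\<omega>. emp_risk f (dataset_S n \<omega>) (A (dataset_S n \<omega>)) \<partial>sample_space D n)
   = integral\<^sup>L (sample_space D n) (train_loss i)"
proof -
  have "(\<integral>\<omega>. emp_risk f (dataset_S n \<omega>) (A (dataset_S n \<omega>)) \<partial>sample_space D n)
      = (\<Sum>j<n. integral\<^sup>L (sample_space D n) (train_loss j)) / real n"
    unfolding emp_risk_eq_sum_train_loss integral_divide_zero
    by (subst Bochner_Integration.integral_sum) (auto intro: integrable_train_loss)
  also have "\<dots> = (\<Sum>j<n. integral\<^sup>L (sample_space D n) (train_loss i)) / real n"
    by (intro arg_cong[where f = "\<lambda>s. s / real n"] sum.cong refl integral_train_loss) simp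
  also have "\<dots> = integral\<^sup>L (sample_space D n) (train_loss i)"
    using i_less_n by simp
  finally show ?thesis .
qed

end

lemma integral_pop_risk:
  assumes "integrable (sample_space D n) heldout_loss"
  shows "(\<integral>\<omega>. pop_risk D f (A (dataset_S n \<omega>)) \<partial>sample_space D n)
       = integral\<^sup>L (sample_space D n) heldout_loss"
proof -
  interpret pair_sigma_finite Dn D
    by unfold_locales
  let ?F = "\<lambda>(x, z). f (A (map x [0..<n])) z"
  let ?\<phi> = "\<lambda>\<omega>. ((fst \<omega>)(i := snd \<omega> i), fst \<omega> i)"
  have distr: "distr (Dn \<Otimes>\<^sub>M Dn) (Dn \<Otimes>\<^sub>M D) ?\<phi> = Dn \<Otimes>\<^sub>M D"
    using D.distr_replace_one[of "{..<n}" i] i_less_n by simp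
  have heldout: "heldout_loss = (\<lambda>\<omega>. ?F (?\<phi> \<omega>))"
    by (simp add: heldout_loss_eq_comp)
  have F_integrable: "integrable (Dn \<Otimes>\<^sub>M D) ?F"
    using assms integrable_distr_eq[OF replace_one_measurable loss_measurable]
    unfolding distr heldout sample_space_eq by simp
  have "(\<integral>x. pop_risk D f (A (map x [0..<n])) \<partial>Dn) = integral\<^sup>L (Dn \<Otimes>\<^sub>M D) ?F"
    using integral_fst'[OF F_integrable] by (simp add: pop_risk_def)
  also have "\<dots> = integral\<^sup>L (sample_space D n) heldout_loss"
    using integral_distr[OF replace_one_measurable loss_measurable]
    unfolding distr heldout sample_space_eq by simp
  finally show ?thesis
    using Dn.integral_pair_fst[of "\<lambda>x. pop_risk D f (A (map x [0..<n]))" Dn]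
    by (simp add: pop_risk_def sample_space_eq dataset_S_def)
qed

lemma eps_gen_eq_integral_loss_diff:
  assumes "integrable (sample_space D n) (\<lambda>\<omega>. pop_risk D f (A (dataset_S n \<omega>)))"
    and "integrable (sample_space D n) (\<lambda>\<omega>. emp_risk f (dataset_S n \<omega>) (A (dataset_S n \<omega>)))"
    and "integrable (sample_space D n) heldout_loss"
  shows "eps_gen D f A n
       = integral\<^sup>L (sample_space D n) heldout_loss - integral\<^sup>L (sample_space D n) (train_loss i)"
  using assms unfolding eps_gen_def by (simp add: integral_pop_risk integral_emp_risk)

lemma eps_opt_eq_integral_train_loss:
  fixes W :: "'z list \<Rightarrow> 'a"
  assumes W_min: "\<And>xs w. length xs = n \<Longrightarrow> emp_risk f xs (W xs) \<le> emp_risk f xs w"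
    and W_measurable: "(\<lambda>s. emp_risk f (map s [0..<n]) (W (map s [0..<n]))) \<in> borel_measurable Dn"
    and emp_risk_integrable:
      "integrable (sample_space D n) (\<lambda>\<omega>. emp_risk f (dataset_S n \<omega>) (A (dataset_S n \<omega>)))"
    and memorization: "eps_c D f W n = 0"
  shows "eps_opt D f A W n = integral\<^sup>L (sample_space D n) (train_loss i)"
proof -
  let ?RW = "\<lambda>\<omega>. emp_risk f (dataset_S n \<omega>) (W (dataset_S n \<omega>))"
  have "integrable (sample_space D n) ?RW"
  proof (rule integrable_nonneg_le[OF emp_risk_integrable])
    show "?RW \<in> borel_measurable (sample_space D n)"
      using measurable_compose[OF measurable_fst W_measurable]
      by (simp add: sample_space_eq dataset_S_def)
    show "0 \<le> ?RW \<omega>" for \<omega>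
      unfolding emp_risk_def by (intro divide_nonneg_nonneg sum_list_nonneg) (auto simp: f_nonneg)
    show "?RW \<omega> \<le> emp_risk f (dataset_S n \<omega>) (A (dataset_S n \<omega>))" for \<omega>
      by (rule W_min) (simp add: dataset_S_def)
  qed
  then show ?thesis
    using emp_risk_integrable memorization
    unfolding eps_opt_def eps_c_def by (simp add: integral_emp_risk)
qed

context
  fixes \<beta> :: real
  assumes smooth: "\<And>z. smooth \<beta> (\<lambda>w. f w z)"
begin

lemma loss_increment_bounds:
  assumes "0 < l"
  shows "heldout_loss \<omega> - train_loss i \<omega>
           \<le> l * \<beta> * train_loss i \<omega> + (1 / (2 * l) + \<beta> / 2) * replace_one_shift \<omega>"
    and "train_loss i \<omega> - heldout_loss \<omega>
           \<le> l * \<beta> * heldout_loss \<omega> + (1 / (2 * l) + \<beta> / 2) * replace_one_shift \<omega>"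
proof -
  let ?S = "A (dataset_S n \<omega>)" and ?Si = "A (dataset_Si n i \<omega>)"
  show "heldout_loss \<omega> - train_loss i \<omega>
      \<le> l * \<beta> * train_loss i \<omega> + (1 / (2 * l) + \<beta> / 2) * replace_one_shift \<omega>"
    using smooth_nonneg_increment_bound[OF smooth f_nonneg assms, where u = ?Si and w = ?S]
    by (simp add: heldout_loss_def train_loss_def replace_one_shift_def norm_minus_commute)
  show "train_loss i \<omega> - heldout_loss \<omega>
      \<le> l * \<beta> * heldout_loss \<omega> + (1 / (2 * l) + \<beta> / 2) * replace_one_shift \<omega>"
    using smooth_nonneg_increment_bound[OF smooth f_nonneg assms, where u = ?S and w = ?Si]
    by (simp add: heldout_loss_def train_loss_def replace_one_shift_def)
qed

lemma integrable_heldout_loss: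
  assumes "integrable (sample_space D n) (\<lambda>\<omega>. emp_risk f (dataset_S n \<omega>) (A (dataset_S n \<omega>)))"
    and "integrable (sample_space D n) replace_one_shift"
  shows "integrable (sample_space D n) heldout_loss"
proof (rule integrable_nonneg_le[OF _ heldout_loss_measurable])
  show "integrable (sample_space D n)
      (\<lambda>\<omega>. (1 + \<beta>) * train_loss i \<omega> + (1 / 2 + \<beta> / 2) * replace_one_shift \<omega>)"
    using integrable_train_loss[OF assms(1) i_less_n] assms(2) by simp
  show "heldout_loss \<omega> \<le> (1 + \<beta>) * train_loss i \<omega> + (1 / 2 + \<beta> / 2) * replace_one_shift \<omega>" for \<omega>
    using loss_increment_bounds(1)[of 1 \<omega>] by (simp add: algebra_simps)
qed (simp add: heldout_loss_def f_nonneg)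

lemma abs_eps_gen_le:
  fixes W :: "'z list \<Rightarrow> 'a"
  assumes W_min: "\<And>xs w. length xs = n \<Longrightarrow> emp_risk f xs (W xs) \<le> emp_risk f xs w"
    and W_measurable: "(\<lambda>s. emp_risk f (map s [0..<n]) (W (map s [0..<n]))) \<in> borel_measurable Dn"
    and pop_risk_integrable:
      "integrable (sample_space D n) (\<lambda>\<omega>. pop_risk D f (A (dataset_S n \<omega>)))"
    and emp_risk_integrable:
      "integrable (sample_space D n) (\<lambda>\<omega>. emp_risk f (dataset_S n \<omega>) (A (dataset_S n \<omega>)))"
    and shift_integrable: "integrable (sample_space D n) replace_one_shift"
    and memorization: "eps_c D f W n = 0"
    and "0 < l"
  shows "\<bar>eps_gen D f A n\<bar> \<le> l * \<beta> * eps_opt D f A W n + (1 / (2 * l) + \<beta> / 2) * eps_stab D A n i"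
proof -
  have "0 \<le> \<beta>"
    using smooth_nonneg_constant[OF smooth] .
  have train_integrable: "integrable (sample_space D n) (train_loss i)"
    using integrable_train_loss[OF emp_risk_integrable i_less_n] .
  have heldout_integrable: "integrable (sample_space D n) heldout_loss"
    using integrable_heldout_loss[OF emp_risk_integrable shift_integrable] .
  have "\<bar>integral\<^sup>L (sample_space D n) heldout_loss - integral\<^sup>L (sample_space D n) (train_loss i)\<bar>
      \<le> l * \<beta> * integral\<^sup>L (sample_space D n) (train_loss i)
        + (1 / (2 * l) + \<beta> / 2) * integral\<^sup>L (sample_space D n) replace_one_shift"
  proof (rule abs_integral_diff_le[OF train_integrable heldout_integrable shift_integrable])
    show "0 \<le> l * \<beta>"
      using \<open>0 < l\<close> \<open>0 \<le> \<beta>\<close> by simp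
  qed (rule loss_increment_bounds[OF \<open>0 < l\<close>])+
  moreover have "eps_stab D A n i = integral\<^sup>L (sample_space D n) replace_one_shift"
    by (simp add: eps_stab_def replace_one_shift_def[abs_def])
  ultimately show ?thesis
    by (simp add: eps_gen_eq_integral_loss_diff[OF pop_risk_integrable emp_risk_integrable heldout_integrable]
      eps_opt_eq_integral_train_loss[OF W_min W_measurable emp_risk_integrable memorization])
qed

end

end

theorem corollary5:
  fixes D :: "'z measure" and f :: "'a::euclidean_space \<Rightarrow> 'z \<Rightarrow> real"
    and A :: "'z list \<Rightarrow> 'a" and W :: "'z list \<Rightarrow> 'a"
    and n i :: nat and \<beta> :: real
  assumes D: "prob_space D"
    and i: "i < n"
    and nonneg: "\<And>w z. f w z \<ge> 0"
    and sm: "\<And>z. smooth \<beta> (\<lambda>w. f w z)"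
    and symm: "symmetric_alg A"
    and W_min: "\<And>xs w. length xs = n \<Longrightarrow> emp_risk f xs (W xs) \<le> emp_risk f xs w"
    and f_meas: "(\<lambda>(w, z). f w z) \<in> borel_measurable (borel \<Otimes>\<^sub>M D)"
    and A_meas: "(\<lambda>s. A (map s [0..<n])) \<in> borel_measurable (\<Pi>\<^sub>M j\<in>{..<n}. D)"
    and W_meas: "(\<lambda>s. emp_risk f (map s [0..<n]) (W (map s [0..<n])))
                   \<in> borel_measurable (\<Pi>\<^sub>M j\<in>{..<n}. D)"
    and int_R: "integrable (sample_space D n) (\<lambda>\<omega>. pop_risk D f (A (dataset_S n \<omega>)))"
    and int_RS: "integrable (sample_space D n)
                   (\<lambda>\<omega>. emp_risk f (dataset_S n \<omega>) (A (dataset_S n \<omega>)))"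
    and int_stab: "integrable (sample_space D n)
                   (\<lambda>\<omega>. (norm (A (dataset_S n \<omega>) - A (dataset_Si n i \<omega>)))\<^sup>2)"
    and memo: "eps_c D f W n = 0"
  shows "\<bar>eps_gen D f A n\<bar> \<le> 2 * sqrt (2 * \<beta> * eps_opt D f A W n * eps_stab D A n i)
             + 2 * \<beta> * eps_stab D A n i
         \<and> \<bar>eps_gen D f A n\<bar> \<le> (2 * sqrt (2 * \<beta>) + 2 * \<beta>)
             * max (sqrt (eps_opt D f A W n * eps_stab D A n i)) (eps_stab D A n i)"
proof -
  interpret replace_one_learning D f A n i
    using D i nonneg f_meas A_meas symm
    by (simp add: replace_one_learning_def replace_one_learning_axioms_def)
  have "0 \<le> \<beta>"
    using smooth_nonneg_constant[OF sm] .
  have opt_nonneg: "0 \<le> eps_opt D f A W n"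
    using eps_opt_eq_integral_train_loss[OF W_min W_meas int_RS memo]
    by (simp add: integral_nonneg_AE train_loss_def nonneg)
  have stab_nonneg: "0 \<le> eps_stab D A n i"
    unfolding eps_stab_def by (rule integral_nonneg_AE) simp
  have gap: "\<bar>eps_gen D f A n\<bar> \<le> 2 * sqrt (2 * \<beta> * eps_opt D f A W n * eps_stab D A n i)
      + 2 * \<beta> * eps_stab D A n i"
  proof (rule le_sqrt_bound_of_forall_pos[OF \<open>0 \<le> \<beta>\<close> opt_nonneg stab_nonneg])
    fix l :: real assume "0 < l"
    have "integrable (sample_space D n) replace_one_shift"
      using int_stab by (simp add: replace_one_shift_def[abs_def])
    from abs_eps_gen_le[OF sm W_min W_meas int_R int_RS this memo \<open>0 < l\<close>]
    show "\<bar>eps_gen D f A n\<bar>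
        \<le> l * \<beta> * eps_opt D f A W n + (1 / (2 * l) + \<beta> / 2) * eps_stab D A n i" .
  qed
  then show ?thesis
    using order_trans[OF gap sqrt_bound_le_max[OF \<open>0 \<le> \<beta>\<close> opt_nonneg stab_nonneg]] by blast
qed

end
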